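(* Let $0<\alpha<\pi/4$ and $S=S(-\alpha,\alpha;1)=\{z\in\mathbb{C}:0<|z|<1,\ -\alpha<\arg z<\alpha\}$. Let $f$ be holomorphic in $S$ and continuous on $\overline{S}\setminus\{0\}$, and suppose there are $M,C,\lambda>0$ with $|f(z)|\le M$ on $S$ and $|f(z)|\le C|z|^{\lambda}$ for $z\in\overline S\setminus\{0\}$ with $\arg z=-\alpha$. Then for every $\varepsilon\in(0,1)$ there exists $K>0$ such that for every $z\in\overline{S}\setminus\{0\}$, $$|f(z)|\le K\big(C|z|^{\lambda}\big)^{(1-\varepsilon)\frac{\alpha-\theta}{2\alpha}},\qquad\theta=\arg z.$$ *)

theory Defs
  imports "HOL-Complex_Analysis.Complex_Analysis"
begin

definition sector :: "real \<Rightarrow> real \<Rightarrow> real \<Rightarrow> complex set" where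
  "sector a b r = {z. 0 < norm z \<and> norm z < r \<and> a < Arg z \<and> Arg z < b}"

end

theory Submission
  imports Defs "HOL-Real_Asymp.Real_Asymp"
begin

text \<open>
  The function h(z) = (\<alpha> - arg z) / (2\<alpha>) * ln (C |z|^lam) is harmonic on the sector, vanishes
  on the edge arg z = \<alpha> and equals ln (C |z|^lam) on the edge arg z = -\<alpha>. Dividing f by
  exp ((1 - \<epsilon>) (h + i h')), with h' a harmonic conjugate of h, gives a function F that is bounded
  on the boundary of the sector (on the lower edge |f| \<le> C |z|^lam leaves only the bounded factor
  (C |z|^lam)^\<epsilon>) and grows at most like |z|^(-lam) at the vertex. By Phragmen-Lindelof, F is
  bounded inside: since the sector has opening less than pi, F(z) exp (-\<delta>/z) tends to 0 at the
  vertex, so the maximum modulus principle bounds it by the boundary bound, and then \<delta> \<rightarrow> 0.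
\<close>

section \<open>Geometry of the sector\<close>

lemma Arg_abs_le_iff_tan:
  assumes "Re z > 0" "0 < \<alpha>" "\<alpha> < pi/2"
  shows "\<bar>Arg z\<bar> \<le> \<alpha> \<longleftrightarrow> \<bar>Im z\<bar> \<le> tan \<alpha> * Re z"
    and "\<bar>Arg z\<bar> < \<alpha> \<longleftrightarrow> \<bar>Im z\<bar> < tan \<alpha> * Re z"
proof -
  have Arg: "Arg z = arctan (Im z / Re z)"
    using arg_conv_arctan assms(1) by blast
  have \<alpha>: "\<alpha> = arctan (tan \<alpha>)"
    using arctan_tan assms(2,3) by simp
  have "\<bar>Arg z\<bar> \<le> \<alpha> \<longleftrightarrow> - tan \<alpha> \<le> Im z / Re z \<and> Im z / Re z \<le> tan \<alpha>"
    by (subst Arg, subst \<alpha>) (auto simp: abs_le_iff arctan_le_iff simp flip: arctan_minus)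
  then show "\<bar>Arg z\<bar> \<le> \<alpha> \<longleftrightarrow> \<bar>Im z\<bar> \<le> tan \<alpha> * Re z"
    using assms(1) by (auto simp: field_simps abs_le_iff)
  have "\<bar>Arg z\<bar> < \<alpha> \<longleftrightarrow> - tan \<alpha> < Im z / Re z \<and> Im z / Re z < tan \<alpha>"
    by (subst Arg, subst \<alpha>) (auto simp: abs_less_iff arctan_less_iff simp flip: arctan_minus)
  then show "\<bar>Arg z\<bar> < \<alpha> \<longleftrightarrow> \<bar>Im z\<bar> < tan \<alpha> * Re z"
    using assms(1) by (auto simp: field_simps abs_less_iff)
qed

lemma sector_eq_cone_Int_ball:
  assumes "0 < \<alpha>" "\<alpha> < pi/2"
  shows "sector (-\<alpha>) \<alpha> r = {z. \<bar>Im z\<bar> < tan \<alpha> * Re z} \<inter> ball 0 r"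
proof (intro set_eqI iffI)
  fix z assume z: "z \<in> sector (-\<alpha>) \<alpha> r"
  then have "z \<noteq> 0" "\<bar>Arg z\<bar> < \<alpha>" by (auto simp: sector_def)
  with assms have "Re z > 0" using Arg_Re_pos by fastforce
  with z show "z \<in> {z. \<bar>Im z\<bar> < tan \<alpha> * Re z} \<inter> ball 0 r"
    using Arg_abs_le_iff_tan(2)[OF _ assms] \<open>\<bar>Arg z\<bar> < \<alpha>\<close> by (auto simp: sector_def)
next
  fix z assume z: "z \<in> {z. \<bar>Im z\<bar> < tan \<alpha> * Re z} \<inter> ball 0 r"
  have "tan \<alpha> > 0" using assms tan_gt_zero by simp
  with z have "Re z > 0" by (smt (verit) mem_Collect_eq Int_iff zero_less_mult_iff)
  with z show "z \<in> sector (-\<alpha>) \<alpha> r"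
    using Arg_abs_le_iff_tan(2)[OF \<open>Re z > 0\<close> assms] by (auto simp: sector_def abs_less_iff)
qed

lemma open_sector:
  assumes "0 < \<alpha>" "\<alpha> < pi/2"
  shows "open (sector (-\<alpha>) \<alpha> r)"
  unfolding sector_eq_cone_Int_ball[OF assms]
  by (intro open_Int open_ball open_Collect_less continuous_intros)

lemma closure_sector_nonzero:
  assumes "0 < \<alpha>" "\<alpha> < pi/2" "z \<in> closure (sector (-\<alpha>) \<alpha> r)" "z \<noteq> 0"
  shows "Re z > 0" "norm z \<le> r" "\<bar>Arg z\<bar> \<le> \<alpha>"
proof -
  have "closure (sector (-\<alpha>) \<alpha> r) \<subseteq> {z. \<bar>Im z\<bar> \<le> tan \<alpha> * Re z} \<inter> cball 0 r"
    unfolding sector_eq_cone_Int_ball[OF assms(1,2)]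
    by (intro closure_minimal closed_Int closed_cball closed_Collect_le continuous_intros) auto
  with assms(3) have z: "\<bar>Im z\<bar> \<le> tan \<alpha> * Re z" "norm z \<le> r" by auto
  have "tan \<alpha> > 0" using assms tan_gt_zero by simp
  with z(1) have "Re z \<ge> 0"
    by (smt (verit) zero_le_mult_iff)
  moreover have "Re z \<noteq> 0"
    using z(1) assms(4) complex_eqI[of z 0] by fastforce
  ultimately show "Re z > 0" by simp
  with z show "norm z \<le> r" "\<bar>Arg z\<bar> \<le> \<alpha>"
    using Arg_abs_le_iff_tan(1) assms(1,2) by auto
qed

lemma frontier_sector_nonzero:
  assumes "0 < \<alpha>" "\<alpha> < pi/2" "z \<in> frontier (sector (-\<alpha>) \<alpha> r)" "z \<noteq> 0"
  shows "norm z = r \<or> Arg z = \<alpha> \<or> Arg z = -\<alpha>"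
proof -
  have z: "z \<in> closure (sector (-\<alpha>) \<alpha> r)" "z \<notin> sector (-\<alpha>) \<alpha> r"
    using assms(3) open_sector[OF assms(1,2)] by (auto simp: frontier_def interior_open)
  then show ?thesis
    using closure_sector_nonzero[OF assms(1,2) z(1) assms(4)] assms(4)
    by (auto simp: sector_def abs_le_iff)
qed

section \<open>A Phragmen-Lindelof principle at the vertex\<close>

lemma norm_le_on_closure_minus:
  fixes f :: "'a::topological_space \<Rightarrow> 'b::real_normed_vector"
  assumes cont: "continuous_on (closure S - T) f" and "S \<inter> T = {}"
    and bound: "\<forall>z\<in>S. norm (f z) \<le> M" and z: "z \<in> closure S - T"
  shows "norm (f z) \<le> M"
proof (cases "z \<in> S")
  case False
  with z have "at z within S \<noteq> bot"
    by (simp add: closure_def trivial_limit_within)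
  moreover have "(f \<longlongrightarrow> f z) (at z within closure S - T)"
    using cont z by (simp add: continuous_on_def)
  then have "((\<lambda>w. norm (f w)) \<longlongrightarrow> norm (f z)) (at z within S)"
    using closure_subset \<open>S \<inter> T = {}\<close> by (blast intro: tendsto_norm tendsto_within_subset)
  moreover have "eventually (\<lambda>w. norm (f w) \<le> M) (at z within S)"
    using bound by (auto simp: eventually_at_filter)
  ultimately show ?thesis
    by (intro tendsto_upperbound) auto
qed (use bound in blast)

lemma norm_exp_minus_divide:
  "norm (exp (- (complex_of_real d / z))) = exp (- d * Re z / (norm z)^2)"
  by (simp add: Re_divide cmod_power2)

lemma Re_ge_norm_mult_cos:
  assumes "\<bar>Arg z\<bar> \<le> \<alpha>" "\<alpha> \<le> pi"
  shows "norm z * cos \<alpha> \<le> Re z"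
proof (cases "z = 0")
  case False
  have "cos \<alpha> \<le> cos \<bar>Arg z\<bar>"
    using assms by (intro cos_monotone_0_pi_le) auto
  with False show ?thesis
    by (simp add: cos_Arg field_simps)
qed simp

lemma eventually_powr_mult_exp_less:
  fixes c B D lam :: real
  assumes "0 < c" "0 < B"
  shows "eventually (\<lambda>\<rho>. D * (\<rho> powr (- lam) * exp (- c / \<rho>)) < B) (at_right 0)"
proof -
  have "((\<lambda>\<rho>. \<rho> powr (- lam) * exp (- c / \<rho>)) \<longlongrightarrow> 0) (at_right 0)"
    using assms(1) by real_asymp
  then have "((\<lambda>\<rho>. D * (\<rho> powr (- lam) * exp (- c / \<rho>))) \<longlongrightarrow> 0) (at_right 0)"
    by (simp add: tendsto_mult_right_zero)
  with assms(2) show ?thesis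
    by (simp add: order_tendstoD(2))
qed

lemma truncated_sector_frontier_damped_le:
  fixes F :: "complex \<Rightarrow> complex" and \<alpha> r \<rho> \<delta> B D lam :: real
  defines "S \<equiv> sector (-\<alpha>) \<alpha> r"
  assumes \<alpha>: "0 < \<alpha>" "\<alpha> < pi/2" and "0 < \<delta>" "0 < \<rho>"
    and frontier: "\<forall>z \<in> frontier S - {0}. norm (F z) \<le> B"
    and growth: "\<forall>z \<in> closure S - {0}. norm (F z) \<le> D * norm z powr (- lam)"
    and circle: "D * (\<rho> powr (- lam) * exp (- \<delta> * cos \<alpha> / \<rho>)) \<le> B"
    and z: "z \<in> frontier ({z. \<rho> < norm z} \<inter> S)"
  shows "norm (F z) * exp (- \<delta> * Re z / (norm z)^2) \<le> B"
proof -
  have "open S" unfolding S_def using open_sector[OF \<alpha>] .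
  then have "open ({z. \<rho> < norm z} \<inter> S)"
    by (intro open_Int open_Collect_less continuous_intros)
  with z have "z \<in> closure ({z. \<rho> < norm z} \<inter> S)" "z \<notin> {z. \<rho> < norm z} \<inter> S"
    unfolding frontier_def by (metis Diff_iff interior_open)+
  moreover have "closure ({z. \<rho> < norm z} \<inter> S) \<subseteq> closure S \<inter> {z. \<rho> \<le> norm z}"
    using closure_subset by (intro closure_minimal closed_Int closed_Collect_le continuous_intros) auto
  ultimately have z_in: "z \<in> closure S" "\<rho> \<le> norm z" "z \<notin> {z. \<rho> < norm z} \<inter> S"
    by auto
  then have "z \<noteq> 0" using \<open>0 < \<rho>\<close> by auto
  note z_geom = closure_sector_nonzero[OF \<alpha> z_in(1)[unfolded S_def] this]
  show ?thesis
  proof (cases "z \<in> S")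
    case False
    then have "norm (F z) \<le> B"
      using frontier z_in(1) \<open>z \<noteq> 0\<close> \<open>open S\<close> by (auto simp: frontier_def interior_open)
    moreover have "exp (- \<delta> * Re z / (norm z)^2) \<le> 1"
      using z_geom(1) \<open>0 < \<delta>\<close> by (simp add: divide_nonneg_pos)
    ultimately show ?thesis
      by (meson mult_left_le norm_ge_zero order_trans)
  next
    case True
    with z_in have "norm z = \<rho>" by auto
    have "\<delta> * cos \<alpha> / \<rho> \<le> \<delta> * Re z / (norm z)^2"
      using Re_ge_norm_mult_cos[OF z_geom(3)] \<alpha> \<open>0 < \<delta>\<close> \<open>0 < \<rho>\<close> \<open>norm z = \<rho>\<close>
      by (simp add: power2_eq_square field_simps)
    moreover have "norm (F z) \<le> D * \<rho> powr (- lam)"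
      using growth z_in(1) \<open>z \<noteq> 0\<close> \<open>norm z = \<rho>\<close> by auto
    ultimately have "norm (F z) * exp (- \<delta> * Re z / (norm z)^2) \<le> D * \<rho> powr (- lam) * exp (- \<delta> * cos \<alpha> / \<rho>)"
      by (intro mult_mono) (auto intro: order_trans[OF norm_ge_zero])
    with circle show ?thesis by (simp add: mult.assoc)
  qed
qed

lemma sector_damped_norm_le:
  fixes F :: "complex \<Rightarrow> complex" and \<alpha> r \<delta> B D lam :: real
  defines "S \<equiv> sector (-\<alpha>) \<alpha> r"
  assumes \<alpha>: "0 < \<alpha>" "\<alpha> < pi/2" and "0 < \<delta>" "0 < B"
    and hol: "F holomorphic_on S" and cont: "continuous_on (closure S - {0}) F"
    and frontier: "\<forall>z \<in> frontier S - {0}. norm (F z) \<le> B"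
    and growth: "\<forall>z \<in> closure S - {0}. norm (F z) \<le> D * norm z powr (- lam)"
    and \<xi>: "\<xi> \<in> closure S - {0}"
  shows "norm (F \<xi>) * exp (- \<delta> * Re \<xi> / (norm \<xi>)^2) \<le> B"
proof -
  \<comment> \<open>|exp (-\<delta>/z)| \<le> exp (-\<delta> cos \<alpha> / |z|) beats the growth D |z|^(-lam) on a small circle |z| = \<rho>.\<close>
  have "\<delta> * cos \<alpha> > 0" using \<alpha> \<open>0 < \<delta>\<close> by (simp add: cos_gt_zero)
  have "eventually (\<lambda>\<rho>. 0 < \<rho> \<and> \<rho> < norm \<xi> \<and>
      D * (\<rho> powr (- lam) * exp (- (\<delta> * cos \<alpha>) / \<rho>)) < B) (at_right 0)"
    using \<xi> eventually_at_right_less eventually_powr_mult_exp_less[OF \<open>\<delta> * cos \<alpha> > 0\<close> \<open>0 < B\<close>]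
      eventually_at_right_field[of "\<lambda>\<rho>. \<rho> < norm \<xi>" 0]
    by (auto intro!: eventually_conj exI[of _ "norm \<xi>"])
  then obtain \<rho> where \<rho>: "0 < \<rho>" "\<rho> < norm \<xi>"
      "D * (\<rho> powr (- lam) * exp (- (\<delta> * cos \<alpha>) / \<rho>)) < B"
    using eventually_happens'[OF trivial_limit_at_right_real] by blast
  then have circle: "D * (\<rho> powr (- lam) * exp (- \<delta> * cos \<alpha> / \<rho>)) \<le> B"
    by simp
  define U where "U = {z. \<rho> < norm z} \<inter> S"
  define G where "G z = F z * exp (- (complex_of_real \<delta> / z))" for z
  have norm_G: "norm (G z) = norm (F z) * exp (- \<delta> * Re z / (norm z)^2)" for z
    unfolding G_def norm_mult norm_exp_minus_divide ..
  have "closure U \<subseteq> closure S \<inter> {z. \<rho> \<le> norm z}"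
    unfolding U_def using closure_subset
    by (intro closure_minimal closed_Int closed_Collect_le continuous_intros) auto
  with \<rho>(1) have "closure U \<subseteq> closure S - {0}" by auto
  then have cont_G: "continuous_on (closure U) G"
    unfolding G_def by (intro continuous_intros continuous_on_subset[OF cont]) auto
  have "open U"
    unfolding U_def S_def using open_sector[OF \<alpha>] by (intro open_Int open_Collect_less continuous_intros)
  moreover have "G holomorphic_on U"
    unfolding G_def U_def using hol \<rho>(1) by (intro holomorphic_intros) auto
  moreover have "bounded U"
    unfolding U_def S_def sector_def by (rule bounded_subset[of "ball 0 r"]) auto
  moreover have "norm (G z) \<le> B" if "z \<in> frontier U" for z
    using truncated_sector_frontier_damped_le[OF \<alpha> \<open>0 < \<delta>\<close> \<rho>(1) _ _ circle] frontier growth that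
    unfolding norm_G U_def S_def by blast
  ultimately have "norm (G z) \<le> B" if "z \<in> U" for z
    using maximum_modulus_frontier[of G U] cont_G that by (simp add: interior_open)
  moreover have "{z. \<rho> < norm z} \<inter> closure S \<subseteq> closure U"
    unfolding U_def by (intro open_Int_closure_subset open_Collect_less continuous_intros)
  with \<xi> \<rho>(2) have "\<xi> \<in> closure U" by auto
  ultimately have "norm (G \<xi>) \<le> B"
    using continuous_on_closure_norm_le[OF cont_G] by blast
  then show ?thesis by (simp add: norm_G)
qed

lemma sector_maximum_principle:
  fixes F :: "complex \<Rightarrow> complex" and \<alpha> r B D lam :: real
  defines "S \<equiv> sector (-\<alpha>) \<alpha> r"
  assumes \<alpha>: "0 < \<alpha>" "\<alpha> < pi/2" and "0 < B"
    and hol: "F holomorphic_on S" and cont: "continuous_on (closure S - {0}) F"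
    and frontier: "\<forall>z \<in> frontier S - {0}. norm (F z) \<le> B"
    and growth: "\<forall>z \<in> closure S - {0}. norm (F z) \<le> D * norm z powr (- lam)"
  shows "\<forall>z \<in> closure S - {0}. norm (F z) \<le> B"
proof
  fix \<xi> assume \<xi>: "\<xi> \<in> closure S - {0}"
  define k where "k = Re \<xi> / (norm \<xi>)^2"
  have "((\<lambda>\<delta>. norm (F \<xi>) * exp (- \<delta> * k)) \<longlongrightarrow> norm (F \<xi>) * exp (- 0 * k)) (at_right 0)"
    by (intro tendsto_intros)
  moreover have "eventually (\<lambda>\<delta>. norm (F \<xi>) * exp (- \<delta> * k) \<le> B) (at_right 0)"
    using eventually_at_right_less
  proof (rule eventually_mono)
    fix \<delta> :: real assume "0 < \<delta>"
    from sector_damped_norm_le[OF \<alpha> this \<open>0 < B\<close> hol[unfolded S_def] cont[unfolded S_def]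
        frontier[unfolded S_def] growth[unfolded S_def] \<xi>[unfolded S_def]]
    show "norm (F \<xi>) * exp (- \<delta> * k) \<le> B" by (simp add: k_def)
  qed
  ultimately show "norm (F \<xi>) \<le> B"
    by (auto intro: tendsto_upperbound)
qed

section \<open>The interpolating weight\<close>

text \<open>At w = Ln z the real part is the harmonic function (a - arg z) / (2a) * ln (C |z|^lam).\<close>
definition log_interpolant :: "real \<Rightarrow> real \<Rightarrow> real \<Rightarrow> complex \<Rightarrow> complex" where
  "log_interpolant a C lam w =
     ((of_real a + \<i> * w) * of_real (ln C) + of_real lam * (of_real a * w + \<i> * w^2 / 2)) / of_real (2*a)"

lemma Re_log_interpolant:
  "Re (log_interpolant a C lam w) = (a - Im w) * (ln C + lam * Re w) / (2*a)"
  unfolding log_interpolant_def by (simp add: power2_eq_square algebra_simps Re_divide_of_real)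

lemma norm_exp_log_interpolant_Ln:
  assumes "z \<noteq> 0" "C > 0"
  shows "norm (exp (- (of_real e * log_interpolant a C lam (Ln z))))
       = (C * norm z powr lam) powr (- (e * (a - Arg z) / (2*a)))"
proof -
  have "ln (C * norm z powr lam) = ln C + lam * ln (norm z)"
    using assms by (simp add: ln_mult ln_powr)
  with assms show ?thesis
    by (simp add: Re_log_interpolant Arg_eq_Im_Ln powr_def field_simps)
qed

lemma holomorphic_on_exp_log_interpolant_Ln:
  "T \<inter> \<real>\<^sub>\<le>\<^sub>0 = {} \<Longrightarrow> (\<lambda>z. exp (- (of_real e * log_interpolant a C lam (Ln z)))) holomorphic_on T"
  unfolding log_interpolant_def by (intro holomorphic_intros) auto

lemma powr_neg_le_one_plus_inverse:
  fixes A q :: real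
  assumes "0 < A" "0 \<le> q" "q \<le> 1"
  shows "A powr (- q) \<le> 1 + 1/A"
proof (cases "A \<ge> 1")
  case True
  then have "A powr (- q) \<le> A powr 0" using assms by (intro powr_mono) auto
  also have "\<dots> \<le> 1 + 1/A" using assms by simp
  finally show ?thesis .
next
  case False
  then have "A powr (- q) \<le> A powr (- 1)" using assms by (intro powr_mono') auto
  with assms show ?thesis by (simp add: powr_minus_divide)
qed

lemma powr_le_one_plus:
  fixes A q :: real
  assumes "0 < A" "0 \<le> q" "q \<le> 1"
  shows "A powr q \<le> 1 + A"
proof (cases "A \<ge> 1")
  case True
  then have "A powr q \<le> A powr 1" using assms by (intro powr_mono) auto
  with assms show ?thesis by simp
next
  case False
  then have "A powr q \<le> A powr 0" using assms by (intro powr_mono') auto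
  with assms show ?thesis by simp
qed

lemma interpolation_exponent_bounds:
  fixes e \<alpha> \<theta> :: real
  assumes "0 \<le> e" "e \<le> 1" "0 < \<alpha>" "\<bar>\<theta>\<bar> \<le> \<alpha>"
  shows "0 \<le> e * (\<alpha> - \<theta>) / (2*\<alpha>)" "e * (\<alpha> - \<theta>) / (2*\<alpha>) \<le> 1"
proof -
  have "0 \<le> (\<alpha> - \<theta>) / (2*\<alpha>)" "(\<alpha> - \<theta>) / (2*\<alpha>) \<le> 1"
    using assms(3,4) by (auto simp: field_simps)
  with assms(1,2) show "0 \<le> e * (\<alpha> - \<theta>) / (2*\<alpha>)" "e * (\<alpha> - \<theta>) / (2*\<alpha>) \<le> 1"
    using mult_le_one[of e "(\<alpha> - \<theta>) / (2*\<alpha>)"] mult_nonneg_nonneg[of e "(\<alpha> - \<theta>) / (2*\<alpha>)"]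
    by simp_all
qed

lemma interpolation_weight_growth:
  fixes C r lam q y M :: real
  assumes "0 < C" "0 < r" "r \<le> 1" "0 \<le> lam" "0 \<le> q" "q \<le> 1" "0 \<le> y" "y \<le> M"
  shows "y * (C * r powr lam) powr (- q) \<le> M * (1 + 1/C) * r powr (- lam)"
proof -
  have "1 \<le> r powr (- lam)"
    using assms ge_one_powr_ge_zero[of "1/r" lam] by (simp add: powr_minus_divide powr_divide)
  have "(C * r powr lam) powr (- q) \<le> 1 + 1 / (C * r powr lam)"
    using assms by (intro powr_neg_le_one_plus_inverse) auto
  also have "\<dots> = 1 + r powr (- lam) / C"
    using assms by (simp add: powr_minus_divide)
  also have "\<dots> \<le> (1 + 1/C) * r powr (- lam)"
    using \<open>1 \<le> r powr (- lam)\<close> by (simp add: algebra_simps)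
  finally have "y * (C * r powr lam) powr (- q) \<le> M * ((1 + 1/C) * r powr (- lam))"
    using assms by (intro mult_mono) auto
  then show ?thesis by (simp add: mult.assoc)
qed

lemma interpolation_weight_boundary:
  fixes C r lam \<epsilon> \<alpha> \<theta> y M :: real
  defines "q \<equiv> (1 - \<epsilon>) * (\<alpha> - \<theta>) / (2*\<alpha>)"
  assumes "0 < C" "0 < r" "r \<le> 1" "0 \<le> lam" "0 < \<epsilon>" "\<epsilon> < 1" "0 < \<alpha>" "\<bar>\<theta>\<bar> \<le> \<alpha>"
    and "r = 1 \<or> \<theta> = \<alpha> \<or> \<theta> = -\<alpha>" and "0 \<le> y" "y \<le> M" "\<theta> = -\<alpha> \<longrightarrow> y \<le> C * r powr lam"
  shows "y * (C * r powr lam) powr (- q) \<le> M * (1 + 1/C) + (1 + C)"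
proof -
  have q: "0 \<le> q" "q \<le> 1"
    unfolding q_def using interpolation_exponent_bounds assms by auto
  have growth: "y * (C * r powr lam) powr (- q) \<le> M * (1 + 1/C) * r powr (- lam)"
    using assms q by (intro interpolation_weight_growth) auto
  have "M \<le> M * (1 + 1/C)" using assms by (simp add: field_simps)
  consider "r = 1" | "\<theta> = \<alpha>" | "\<theta> = -\<alpha>" using assms by blast
  then show ?thesis
  proof cases
    case 1
    then show ?thesis using growth assms(2) by simp
  next
    case 2
    then show ?thesis using assms \<open>M \<le> M * (1 + 1/C)\<close> by (simp add: q_def)
  next
    case 3
    define A where "A = C * r powr lam"
    have "0 < A" unfolding A_def using assms by simp
    have "q = 1 - \<epsilon>" using 3 assms by (simp add: q_def field_simps)
    have "y * A powr (- q) \<le> A * A powr (- q)"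
      using 3 assms by (intro mult_right_mono) (auto simp: A_def)
    also have "\<dots> = A powr 1 * A powr (- q)"
      using \<open>0 < A\<close> by simp
    also have "\<dots> = A powr (1 + - q)"
      by (rule powr_add[symmetric])
    also have "\<dots> = A powr \<epsilon>"
      using \<open>q = 1 - \<epsilon>\<close> by simp
    also have "\<dots> \<le> 1 + A"
      using powr_le_one_plus \<open>0 < A\<close> assms by simp
    also have "\<dots> \<le> 1 + C"
      unfolding A_def using assms powr_mono2[of lam r 1] by (simp add: mult_left_le)
    finally show ?thesis
      using assms unfolding A_def by (smt (verit) divide_nonneg_pos mult_nonneg_nonneg)
  qed
qed

lemma sector_weighted_norm_le:
  fixes \<alpha> \<epsilon> M C lam :: real and f :: "complex \<Rightarrow> complex"
  defines "S \<equiv> sector (-\<alpha>) \<alpha> 1"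
  assumes \<alpha>: "0 < \<alpha>" "\<alpha> < pi/2" and \<epsilon>: "0 < \<epsilon>" "\<epsilon> < 1"
    and hol: "f holomorphic_on S" and cont: "continuous_on (closure S - {0}) f"
    and "0 \<le> M" "0 < C" "0 \<le> lam"
    and bound: "\<forall>z \<in> S. norm (f z) \<le> M"
    and lower_edge: "\<forall>z \<in> closure S - {0}. Arg z = -\<alpha> \<longrightarrow> norm (f z) \<le> C * norm z powr lam"
  shows "\<forall>z \<in> closure S - {0}.
           norm (f z) * (C * norm z powr lam) powr (- ((1 - \<epsilon>) * (\<alpha> - Arg z) / (2*\<alpha>)))
             \<le> M * (1 + 1/C) + (1 + C)"
proof -
  define F where "F z = f z * exp (- (of_real (1 - \<epsilon>) * log_interpolant \<alpha> C lam (Ln z)))" for z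
  have norm_F: "norm (F z) = norm (f z) * (C * norm z powr lam) powr (- ((1 - \<epsilon>) * (\<alpha> - Arg z) / (2*\<alpha>)))"
    if "z \<noteq> 0" for z
    using norm_exp_log_interpolant_Ln[OF that \<open>0 < C\<close>] by (simp add: F_def norm_mult)
  have geom: "Re z > 0" "norm z \<le> 1" "\<bar>Arg z\<bar> \<le> \<alpha>" if "z \<in> closure S - {0}" for z
    using closure_sector_nonzero[OF \<alpha>] that by (auto simp: S_def)
  have f_le: "0 \<le> norm (f z)" "norm (f z) \<le> M" if "z \<in> closure S - {0}" for z
    using norm_le_on_closure_minus[OF cont _ bound that] by (auto simp: S_def sector_def)
  have "(closure S - {0}) \<inter> \<real>\<^sub>\<le>\<^sub>0 = {}"
    using geom(1) by (force simp: complex_nonpos_Reals_iff)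
  then have weight: "(\<lambda>z. exp (- (of_real (1 - \<epsilon>) * log_interpolant \<alpha> C lam (Ln z))))
      holomorphic_on closure S - {0}"
    by (rule holomorphic_on_exp_log_interpolant_Ln)
  have "S \<subseteq> closure S - {0}"
    using closure_subset[of S] by (auto simp: S_def sector_def)
  then have hol_F: "F holomorphic_on S"
    unfolding F_def using hol weight by (intro holomorphic_on_mult) (auto elim: holomorphic_on_subset)
  have cont_F: "continuous_on (closure S - {0}) F"
    unfolding F_def using cont holomorphic_on_imp_continuous_on[OF weight] by (rule continuous_on_mult)
  have "\<forall>z \<in> closure S - {0}. norm (F z) \<le> M * (1 + 1/C) + (1 + C)"
    unfolding S_def
  proof (rule sector_maximum_principle[OF \<alpha> _ hol_F[unfolded S_def] cont_F[unfolded S_def],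
        where D = "M * (1 + 1/C)" and lam = lam])
    show "0 < M * (1 + 1/C) + (1 + C)"
      using \<open>0 \<le> M\<close> \<open>0 < C\<close> by (simp add: add_nonneg_pos)
  next
    show "\<forall>z \<in> frontier (sector (-\<alpha>) \<alpha> 1) - {0}. norm (F z) \<le> M * (1 + 1/C) + (1 + C)"
    proof
      fix z assume z: "z \<in> frontier (sector (-\<alpha>) \<alpha> 1) - {0}"
      then have "z \<in> closure S - {0}" by (auto simp: S_def frontier_def)
      with z show "norm (F z) \<le> M * (1 + 1/C) + (1 + C)"
        using frontier_sector_nonzero[OF \<alpha>] geom f_le lower_edge \<epsilon> \<alpha> \<open>0 < C\<close> \<open>0 \<le> lam\<close>
        by (auto simp: norm_F intro!: interpolation_weight_boundary)
    qed
  next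
    show "\<forall>z \<in> closure (sector (-\<alpha>) \<alpha> 1) - {0}. norm (F z) \<le> M * (1 + 1/C) * norm z powr (- lam)"
    proof
      fix z assume z: "z \<in> closure (sector (-\<alpha>) \<alpha> 1) - {0}"
      then show "norm (F z) \<le> M * (1 + 1/C) * norm z powr (- lam)"
        using geom[of z] f_le[of z] \<epsilon> \<alpha> \<open>0 < C\<close> \<open>0 \<le> lam\<close>
          interpolation_exponent_bounds[of "1 - \<epsilon>" \<alpha> "Arg z"]
        by (auto simp: S_def norm_F intro!: interpolation_weight_growth)
    qed
  qed
  then show ?thesis by (simp add: norm_F)
qed

theorem lemma5p2:
  fixes \<alpha> M C lam :: real and f :: "complex \<Rightarrow> complex"
  assumes "0 < \<alpha>" and "\<alpha> < pi / 4"
    and "f holomorphic_on sector (-\<alpha>) \<alpha> 1"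
    and "continuous_on (closure (sector (-\<alpha>) \<alpha> 1) - {0}) f"
    and "0 < M" and "0 < C" and "0 < lam"
    and "\<forall>z \<in> sector (-\<alpha>) \<alpha> 1. norm (f z) \<le> M"
    and "\<forall>z \<in> closure (sector (-\<alpha>) \<alpha> 1) - {0}. Arg z = -\<alpha> \<longrightarrow> norm (f z) \<le> C * norm z powr lam"
  shows "\<forall>\<epsilon>. 0 < \<epsilon> \<and> \<epsilon> < 1 \<longrightarrow>
           (\<exists>K > 0. \<forall>z \<in> closure (sector (-\<alpha>) \<alpha> 1) - {0}.
              norm (f z) \<le> K * (C * norm z powr lam) powr ((1 - \<epsilon>) * (\<alpha> - Arg z) / (2 * \<alpha>)))"
proof (intro allI impI)
  fix \<epsilon> :: real assume \<epsilon>: "0 < \<epsilon> \<and> \<epsilon> < 1"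
  define K where "K = M * (1 + 1/C) + (1 + C)"
  have weighted: "\<forall>z \<in> closure (sector (-\<alpha>) \<alpha> 1) - {0}.
      norm (f z) * (C * norm z powr lam) powr (- ((1 - \<epsilon>) * (\<alpha> - Arg z) / (2*\<alpha>))) \<le> K"
    unfolding K_def using assms \<epsilon> by (intro sector_weighted_norm_le) auto
  show "\<exists>K > 0. \<forall>z \<in> closure (sector (-\<alpha>) \<alpha> 1) - {0}.
      norm (f z) \<le> K * (C * norm z powr lam) powr ((1 - \<epsilon>) * (\<alpha> - Arg z) / (2 * \<alpha>))"
  proof (intro exI[of _ K] conjI ballI)
    show "0 < K" unfolding K_def using assms(5,6) by (simp add: add_pos_pos)
  next
    fix z assume z: "z \<in> closure (sector (-\<alpha>) \<alpha> 1) - {0}"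
    define A where "A = C * norm z powr lam"
    define q where "q = (1 - \<epsilon>) * (\<alpha> - Arg z) / (2 * \<alpha>)"
    have "0 < A" unfolding A_def using z assms(6) by simp
    then have "norm (f z) = norm (f z) * A powr (- q) * A powr q"
      by (simp add: powr_minus field_simps)
    also have "\<dots> \<le> K * A powr q"
      using weighted z by (intro mult_right_mono) (auto simp: A_def q_def)
    finally show "norm (f z) \<le> K * (C * norm z powr lam) powr ((1 - \<epsilon>) * (\<alpha> - Arg z) / (2 * \<alpha>))"
      unfolding A_def q_def .
  qed
qed

end
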